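(* In the curved-exam game described in the context, fix a student $i$ and define $$\phi_i(z):=\Big(m+\tfrac{n-1}{n}(1-z)\Big)^{\alpha_i}\Big(1+\tfrac{nm}{n-1}-z\Big)^{1-\alpha_i}-1 .$$ Then $\phi_i$ has a unique zero $J_i$ in the interval $\big[\frac{nm-\alpha_i}{n-1},\ \frac{nm}{n-1}-\frac{\alpha_i}{n-\alpha_i}\big]$, which is contained in $\big[\frac{nm-1}{n-1},\frac{nm}{n-1}\big]$. Put $x_i^{(L)}(x_{-i}):=\alpha_i-(1-\alpha_i)\big(\frac{nm}{n-1}-\bar x_{-i}\big)$. If $\bar x_{-i}=J_i$, then $U_i(x_i^{(L)},x_{-i})=U_i(\alpha_i,x_{-i})$, the effort $x_i^{(L)}$ makes the curve ($\bar x<m$) and $\alpha_i$ breaks it ($\bar x\ge m$). The best response correspondence $BR_i(x_{-i})=\arg\max_{x_i\in[0,1]}U_i(x_i,x_{-i})$ is $$BR_i(x_{-i})=\begin{cases}\{\alpha_i\} & \text{if } J_i<\bar x_{-i}\le1,\\ \{\alpha_i-(1-\alpha_i)(\frac{nm}{n-1}-J_i),\ \alpha_i\} & \text{if } \bar x_{-i}=J_i,\\ \{\alpha_i-(1-\alpha_i)(\frac{nm}{n-1}-\bar x_{-i})\} & \text{if } \frac{nm}{n-1}-\frac{\alpha_i}{1-\alpha_i}\le\bar x_{-i}<J_i,\\ \{0\} & \text{if } 0\le\bar x_{-i}\le\frac{nm}{n-1}-\frac{\alpha_i}{1-\alpha_i}.\end{cases}$$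
   Context: The curved-exam game: fix $n\ge2$, abilities $\alpha_1,\dots,\alpha_n\in(0,1)$, target mean $m\in(0,1)$. Student $i$ chooses $x_i\in[0,1]$; $x_{-i}=(x_j)_{j\ne i}$; $\bar x=\frac1n\sum_j x_j$, $\bar x_{-i}=\frac1{n-1}\sum_{j\ne i}x_j$. Grade $G_i(x)=x_i+\max(m-\bar x,0)=\max\big(m+\frac{n-1}{n}(x_i-\bar x_{-i}),x_i\big)$ (not truncated at 1); payoff $U_i(x)=G_i(x)^{\alpha_i}(1-x_i)^{1-\alpha_i}$. *)

theory Defs
  imports Complex_Main
begin

text \<open>Curved-exam game. Students are indexed by 0,...,n-1; an effort profile is
  a function x :: nat => real, of which only the values x j for j < n matter.\<close>

definition xbar :: "nat \<Rightarrow> (nat \<Rightarrow> real) \<Rightarrow> real" where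
  "xbar n x = (\<Sum>j<n. x j) / real n"

definition xbar_minus :: "nat \<Rightarrow> nat \<Rightarrow> (nat \<Rightarrow> real) \<Rightarrow> real" where
  "xbar_minus n i x = (\<Sum>j\<in>{..<n} - {i}. x j) / (real n - 1)"

definition grade :: "nat \<Rightarrow> real \<Rightarrow> nat \<Rightarrow> (nat \<Rightarrow> real) \<Rightarrow> real" where
  "grade n m i x = x i + max (m - xbar n x) 0"

text \<open>Payoff of student i with ability a (exponents a, 1-a are positive, so powr
  agrees with the usual power, including at base 0).\<close>
definition payoff :: "nat \<Rightarrow> real \<Rightarrow> real \<Rightarrow> nat \<Rightarrow> (nat \<Rightarrow> real) \<Rightarrow> real" where
  "payoff n m a i x = grade n m i x powr a * (1 - x i) powr (1 - a)"

definition best_response :: "nat \<Rightarrow> real \<Rightarrow> real \<Rightarrow> nat \<Rightarrow> (nat \<Rightarrow> real) \<Rightarrow> real set" where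
  "best_response n m a i x =
     {y \<in> {0..1}. \<forall>z\<in>{0..1}. payoff n m a i (x(i := z)) \<le> payoff n m a i (x(i := y))}"

definition phi :: "nat \<Rightarrow> real \<Rightarrow> real \<Rightarrow> real \<Rightarrow> real" where
  "phi n m a z = (m + (real n - 1) / real n * (1 - z)) powr a
                 * (1 + real n * m / (real n - 1) - z) powr (1 - a) - 1"

definition J_lo :: "nat \<Rightarrow> real \<Rightarrow> real \<Rightarrow> real" where
  "J_lo n m a = (real n * m - a) / (real n - 1)"

definition J_hi :: "nat \<Rightarrow> real \<Rightarrow> real \<Rightarrow> real" where
  "J_hi n m a = real n * m / (real n - 1) - a / (real n - a)"

definition J :: "nat \<Rightarrow> real \<Rightarrow> real \<Rightarrow> real" where
  "J n m a = (THE z. z \<in> {J_lo n m a .. J_hi n m a} \<and> phi n m a z = 0)"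

definition xL :: "nat \<Rightarrow> real \<Rightarrow> real \<Rightarrow> real \<Rightarrow> real" where
  "xL n m a s = a - (1 - a) * (real n * m / (real n - 1) - s)"

end

theory Submission
  imports Defs
begin

text \<open>
  Write c = (n - 1) / n and w = 1 + n m / (n - 1) - xbar_{-i}. As a function of the own
  effort z, the payoff of student i is max(c (z + w - 1), z)^alpha (1 - z)^(1 - alpha), the
  first argument of the max being the curved grade. Weighted AM-GM bounds the flat branch
  z^alpha (1 - z)^(1 - alpha) by A = alpha^alpha (1 - alpha)^(1 - alpha), with equality only at
  z = alpha, and the curved branch by c^alpha A w, with equality only at
  z = 1 - (1 - alpha) w = x_i^(L). Hence the best response is decided by the sign of
  c^alpha w - 1, which is phi_i(xbar_{-i}). The function phi_i is affine and decreasing with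
  zero J_i = 1 + n m / (n - 1) - (n / (n - 1))^alpha, and Bernoulli's inequality places J_i
  strictly inside the stated interval. When x_i^(L) < 0 the curved branch is decreasing on
  [0, 1], and its value at 0 beats A because c >= 1/2.
\<close>

section \<open>Weighted AM-GM\<close>

lemma weighted_amgm_strict:
  fixes a p q :: real
  assumes a: "0 < a" "a < 1" and pq: "0 \<le> p" "0 \<le> q" "p \<noteq> q"
  shows "p powr a * q powr (1 - a) < a * p + (1 - a) * q"
proof (cases "p = 0 \<or> q = 0")
  case True
  then show ?thesis using a pq by auto
next
  case False
  define M where "M = a * p + (1 - a) * q"
  have p: "p > 0" and q: "q > 0" using False pq by auto
  then have M: "M > 0" unfolding M_def using a by (simp add: add_pos_pos)
  have "p - M = (1 - a) * (p - q)" unfolding M_def by (simp add: algebra_simps)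
  then have "p \<noteq> M" using a pq(3) by auto
  then have "ln (p / M) < p / M - 1"
    using ln_le_minus_one[of "p / M"] ln_eq_minus_one[of "p / M"] p M by fastforce
  moreover have "ln (q / M) \<le> q / M - 1" using ln_le_minus_one q M by simp
  moreover have "a * (p / M - 1) + (1 - a) * (q / M - 1) = 0"
    using M unfolding M_def by (simp add: field_simps)
  ultimately have "a * ln (p / M) + (1 - a) * ln (q / M) < 0"
    using a by (smt (verit) mult_left_mono mult_strict_left_mono)
  also have "a * ln (p / M) + (1 - a) * ln (q / M) = ln (p powr a * q powr (1 - a) / M)"
    using p q M by (simp add: ln_div ln_mult algebra_simps)
  finally show ?thesis
    using p q M unfolding M_def[symmetric] by (simp add: ln_less_zero_iff divide_less_eq)
qed

lemma weighted_amgm_scaled: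
  fixes a u v :: real
  assumes a: "0 < a" "a < 1" and uv: "0 \<le> u" "0 \<le> v"
  shows "u powr a * v powr (1 - a) \<le> a powr a * (1 - a) powr (1 - a) * (u + v)"
    and "u powr a * v powr (1 - a) = a powr a * (1 - a) powr (1 - a) * (u + v)
         \<longleftrightarrow> u * (1 - a) = v * a"
proof -
  define p q where "p = u / a" and "q = v / (1 - a)"
  have u: "u = a * p" and v: "v = (1 - a) * q" and pq: "0 \<le> p" "0 \<le> q"
    using a uv unfolding p_def q_def by auto
  have A: "a powr a * (1 - a) powr (1 - a) > 0" using a by simp
  have split: "u powr a * v powr (1 - a) = a powr a * (1 - a) powr (1 - a) * (p powr a * q powr (1 - a))"
    using a pq by (simp add: u v powr_mult)
  have sum: "u + v = a * p + (1 - a) * q" using u v by simp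
  have eq: "p powr a * q powr (1 - a) = a * p + (1 - a) * q \<longleftrightarrow> p = q"
  proof
    show "p = q" if "p powr a * q powr (1 - a) = a * p + (1 - a) * q"
      using weighted_amgm_strict[OF a pq] that by force
    show "p powr a * q powr (1 - a) = a * p + (1 - a) * q" if "p = q"
      using that pq by (cases "q = 0") (simp_all flip: powr_add add: algebra_simps)
  qed
  then have "p powr a * q powr (1 - a) \<le> a * p + (1 - a) * q"
    using weighted_amgm_strict[OF a pq] by (cases "p = q") auto
  then show "u powr a * v powr (1 - a) \<le> a powr a * (1 - a) powr (1 - a) * (u + v)"
    unfolding split sum using A by (intro mult_left_mono) auto
  have "p = q \<longleftrightarrow> u * (1 - a) = v * a"
    unfolding u v using a by auto
  with eq show "u powr a * v powr (1 - a) = a powr a * (1 - a) powr (1 - a) * (u + v)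
         \<longleftrightarrow> u * (1 - a) = v * a"
    unfolding split sum using A by auto
qed

lemma one_minus_less_powr:
  fixes a c :: real
  assumes a: "0 < a" "a < 1" and c: "1 / 2 \<le> c"
  shows "1 - a < c powr a"
proof -
  have "(2::real) powr a < 1 + a"
    using weighted_amgm_strict[OF a, of 2 1] by simp
  then have "(1 - a) * 2 powr a < (1 - a) * (1 + a)"
    using a by simp
  also have "\<dots> \<le> 1" by (simp add: algebra_simps)
  finally have "1 - a < (1 / 2) powr a"
    by (simp add: powr_divide field_simps)
  also have "\<dots> \<le> c powr a" using a c by (intro powr_mono2) auto
  finally show ?thesis .
qed

section \<open>The one-dimensional best-response problem\<close>

definition curved_payoff :: "real \<Rightarrow> real \<Rightarrow> real \<Rightarrow> real \<Rightarrow> real" where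
  "curved_payoff a c w z = max (c * (z + w - 1)) z powr a * (1 - z) powr (1 - a)"

definition argmax_unit :: "(real \<Rightarrow> real) \<Rightarrow> real set" where
  "argmax_unit f = {y \<in> {0..1}. \<forall>z\<in>{0..1}. f z \<le> f y}"

lemma argmax_unit_eqI:
  assumes le: "\<And>z. z \<in> {0..1} \<Longrightarrow> f z \<le> M"
    and attained: "\<And>y. y \<in> S \<Longrightarrow> y \<in> {0..1} \<and> M \<le> f y"
    and only: "\<And>z. z \<in> {0..1} \<Longrightarrow> f z = M \<Longrightarrow> z \<in> S"
    and "S \<noteq> {}"
  shows "argmax_unit f = S"
proof
  show "argmax_unit f \<subseteq> S"
  proof
    fix y assume y: "y \<in> argmax_unit f"
    obtain s where "s \<in> S" using \<open>S \<noteq> {}\<close> by blast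
    with y attained have "M \<le> f y" unfolding argmax_unit_def by force
    with y le have "f y = M" unfolding argmax_unit_def by (auto intro: antisym)
    with y only show "y \<in> S" unfolding argmax_unit_def by blast
  qed
  show "S \<subseteq> argmax_unit f" using attained le unfolding argmax_unit_def by force
qed

lemma curved_payoff_ge:
  assumes "0 \<le> a" "0 \<le> y" "y \<le> max (c * (z + w - 1)) z" "z \<le> 1"
  shows "y powr a * (1 - z) powr (1 - a) \<le> curved_payoff a c w z"
  unfolding curved_payoff_def using assms by (intro mult_right_mono powr_mono2) auto

lemma curved_payoff_at_ability:
  assumes "0 < a" "a < 1"
  shows "a powr a * (1 - a) powr (1 - a) \<le> curved_payoff a c w a"
  using assms by (intro curved_payoff_ge) auto

lemma curved_payoff_curve:
  assumes "0 < c" "0 \<le> z" "z < c * (z + w - 1)"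
  shows "curved_payoff a c w z = c powr a * ((z + w - 1) powr a * (1 - z) powr (1 - a))"
proof -
  have "0 \<le> z + w - 1" using assms by (smt (verit) mult_pos_neg)
  then show ?thesis unfolding curved_payoff_def using assms by (simp add: powr_mult)
qed

lemma curved_payoff_flat:
  assumes "\<not> z < c * (z + w - 1)"
  shows "curved_payoff a c w z = z powr a * (1 - z) powr (1 - a)"
  unfolding curved_payoff_def using assms by (simp add: max_def)

lemma curved_payoff_branches:
  assumes a: "0 < a" "a < 1" and c: "0 < c" and z: "z \<in> {0..1}"
  obtains (curve) "curved_payoff a c w z \<le> c powr a * (a powr a * (1 - a) powr (1 - a)) * w"
      "curved_payoff a c w z = c powr a * (a powr a * (1 - a) powr (1 - a)) * w
       \<Longrightarrow> z = 1 - (1 - a) * w"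
  | (flat) "curved_payoff a c w z \<le> a powr a * (1 - a) powr (1 - a)"
      "curved_payoff a c w z = a powr a * (1 - a) powr (1 - a) \<Longrightarrow> z = a"
proof (cases "z < c * (z + w - 1)")
  case True
  have u: "0 \<le> z + w - 1" using c z True by (smt (verit) atLeastAtMost_iff mult_pos_neg)
  have v: "0 \<le> 1 - z" using z by simp
  note amgm = weighted_amgm_scaled[OF a u v]
  have U: "curved_payoff a c w z = c powr a * ((z + w - 1) powr a * (1 - z) powr (1 - a))"
    using curved_payoff_curve[OF c _ True] z by simp
  have c_pos: "c powr a > 0" using c by simp
  show ?thesis
  proof (rule curve)
    show "curved_payoff a c w z \<le> c powr a * (a powr a * (1 - a) powr (1 - a)) * w"
      unfolding U using amgm(1) c_pos by (simp add: mult.assoc)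
    assume "curved_payoff a c w z = c powr a * (a powr a * (1 - a) powr (1 - a)) * w"
    then have "(z + w - 1) * (1 - a) = (1 - z) * a"
      unfolding U using amgm(2) c_pos by (simp add: mult.assoc)
    then show "z = 1 - (1 - a) * w" by (simp add: algebra_simps)
  qed
next
  case False
  have v: "0 \<le> 1 - z" using z by simp
  note amgm = weighted_amgm_scaled[OF a _ v, of z]
  show ?thesis
  proof (rule flat)
    show "curved_payoff a c w z \<le> a powr a * (1 - a) powr (1 - a)"
      unfolding curved_payoff_flat[OF False] using amgm(1) z by simp
    assume "curved_payoff a c w z = a powr a * (1 - a) powr (1 - a)"
    then have "z * (1 - a) = (1 - z) * a"
      unfolding curved_payoff_flat[OF False] using amgm(2) z by simp
    then show "z = a" by (simp add: algebra_simps)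
  qed
qed

lemma curved_payoff_at_interior:
  assumes a: "0 < a" "a < 1" and c: "0 < c" and w: "0 \<le> w" "0 \<le> 1 - (1 - a) * w"
  shows "c powr a * (a powr a * (1 - a) powr (1 - a)) * w \<le> curved_payoff a c w (1 - (1 - a) * w)"
proof -
  have uv: "0 \<le> a * w" "0 \<le> (1 - a) * w" using a w by auto
  have "(a * w) powr a * ((1 - a) * w) powr (1 - a)
      = a powr a * (1 - a) powr (1 - a) * (a * w + (1 - a) * w)"
    using weighted_amgm_scaled(2)[OF a uv] by (simp add: mult_ac)
  also have "a * w + (1 - a) * w = w" by (simp add: algebra_simps)
  finally have "(a * w) powr a * ((1 - a) * w) powr (1 - a) = a powr a * (1 - a) powr (1 - a) * w" .
  moreover have "(c * (a * w)) powr a * (1 - (1 - (1 - a) * w)) powr (1 - a)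
      \<le> curved_payoff a c w (1 - (1 - a) * w)"
    using a c w by (intro curved_payoff_ge) (auto simp: algebra_simps intro: mult_left_le_one_le)
  ultimately show ?thesis using a c w by (simp add: powr_mult algebra_simps)
qed

lemma curve_less_corner:
  fixes a w z :: real
  assumes a: "0 < a" "a < 1" and z: "0 < z" "z \<le> 1" and big: "1 \<le> (1 - a) * w"
  shows "(z + w - 1) powr a * (1 - z) powr (1 - a) < (w - 1) powr a"
proof -
  have slack: "a \<le> (1 - a) * (w - 1)" using big by (simp add: algebra_simps)
  then have w: "w > 1" using a by (smt (verit) mult_nonneg_nonpos)
  define p where "p = (z + w - 1) / (w - 1)"
  have p: "p > 1" using w z unfolding p_def by simp
  have "a * p + (1 - a) * (1 - z) = 1 + z * (a / (w - 1) - (1 - a))"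
    using w unfolding p_def by (simp add: field_simps)
  also have "\<dots> \<le> 1"
  proof -
    have "a / (w - 1) \<le> 1 - a" using slack w by (simp add: divide_le_eq mult.commute)
    then show ?thesis using z by (simp add: mult_nonneg_nonpos)
  qed
  finally have "p powr a * (1 - z) powr (1 - a) < 1"
    using weighted_amgm_strict[OF a, of p "1 - z"] p z by simp
  then have "(w - 1) powr a * (p powr a * (1 - z) powr (1 - a)) < (w - 1) powr a"
    using w by simp
  moreover have "(z + w - 1) powr a = (w - 1) powr a * p powr a"
    using w p unfolding p_def by (simp add: powr_divide)
  ultimately show ?thesis by (simp add: mult.assoc)
qed

lemma argmax_curved_payoff_flat:
  assumes a: "0 < a" "a < 1" and c: "0 < c" and low: "c powr a * w < 1"
  shows "argmax_unit (curved_payoff a c w) = {a}"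
proof -
  define A where "A = a powr a * (1 - a) powr (1 - a)"
  have lt: "c powr a * A * w < A"
    using mult_strict_right_mono[OF low, of A] a unfolding A_def by (simp add: mult_ac)
  note branches = curved_payoff_branches[OF a c, where w = w, folded A_def]
  show ?thesis
  proof (rule argmax_unit_eqI)
    show "curved_payoff a c w z \<le> A" if "z \<in> {0..1}" for z
      by (cases rule: branches[OF that]) (use lt in auto)
    show "z \<in> {a}" if "z \<in> {0..1}" "curved_payoff a c w z = A" for z
      by (cases rule: branches[OF that(1)]) (use lt that(2) in auto)
  qed (use a curved_payoff_at_ability[OF a] in \<open>auto simp: A_def\<close>)
qed

lemma argmax_curved_payoff_tie:
  assumes a: "0 < a" "a < 1" and half: "1 / 2 \<le> c" and tie: "c powr a * w = 1"
  shows "argmax_unit (curved_payoff a c w) = {1 - (1 - a) * w, a}"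
proof -
  define A where "A = a powr a * (1 - a) powr (1 - a)"
  have c: "0 < c" using half by simp
  have eq: "c powr a * A * w = A" using tie by (simp add: mult_ac)
  have w: "0 \<le> w" using tie c by (smt (verit) mult_nonneg_nonpos powr_ge_zero)
  have "(1 - a) * w \<le> c powr a * w"
    using one_minus_less_powr[OF a half] w by (simp add: mult_right_mono)
  then have interior: "(1 - a) * w \<le> 1" using tie by simp
  note branches = curved_payoff_branches[OF a c, where w = w, folded A_def]
  show ?thesis
  proof (rule argmax_unit_eqI)
    show "curved_payoff a c w z \<le> A" if "z \<in> {0..1}" for z
      by (cases rule: branches[OF that]) (use eq in auto)
    show "z \<in> {1 - (1 - a) * w, a}" if "z \<in> {0..1}" "curved_payoff a c w z = A" for z
      by (cases rule: branches[OF that(1)]) (use eq that(2) in auto)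
  qed (use a w interior curved_payoff_at_ability[OF a, folded A_def]
      curved_payoff_at_interior[OF a c w, folded A_def, unfolded eq] in auto)
qed

lemma argmax_curved_payoff_interior:
  assumes a: "0 < a" "a < 1" and c: "0 < c" and high: "1 < c powr a * w"
    and interior: "(1 - a) * w \<le> 1"
  shows "argmax_unit (curved_payoff a c w) = {1 - (1 - a) * w}"
proof -
  define A where "A = a powr a * (1 - a) powr (1 - a)"
  have gt: "A < c powr a * A * w"
    using mult_strict_right_mono[OF high, of A] a unfolding A_def by (simp add: mult_ac)
  have w: "0 \<le> w" using high c by (smt (verit) mult_nonneg_nonpos powr_ge_zero)
  note branches = curved_payoff_branches[OF a c, where w = w, folded A_def]
  show ?thesis
  proof (rule argmax_unit_eqI)
    show "curved_payoff a c w z \<le> c powr a * A * w" if "z \<in> {0..1}" for z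
      by (cases rule: branches[OF that]) (use gt in auto)
    show "z \<in> {1 - (1 - a) * w}" if "z \<in> {0..1}" "curved_payoff a c w z = c powr a * A * w" for z
      by (cases rule: branches[OF that(1)]) (use gt that(2) in auto)
  qed (use a w interior curved_payoff_at_interior[OF a c w] in \<open>auto simp: A_def\<close>)
qed

lemma amgm_constant_less_corner:
  fixes a c w :: real
  assumes a: "0 < a" "a < 1" and c: "1 / 2 \<le> c" and corner: "1 \<le> (1 - a) * w"
  shows "a powr a * (1 - a) powr (1 - a) < (c * (w - 1)) powr a"
proof -
  have slack: "a / (1 - a) \<le> w - 1" using corner a by (simp add: field_simps)
  have "a powr a * (1 - a) powr (1 - a) = (1 - a) * (a / (1 - a)) powr a"
    using a by (simp add: powr_divide powr_diff field_simps)
  also have "\<dots> < c powr a * (a / (1 - a)) powr a"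
    using one_minus_less_powr[OF a c] a by simp
  also have "\<dots> \<le> (c * (w - 1)) powr a"
    using slack a c by (simp add: powr_mult powr_mono2)
  finally show ?thesis .
qed

lemma argmax_curved_payoff_corner:
  assumes a: "0 < a" "a < 1" and c: "1 / 2 \<le> c" and corner: "1 \<le> (1 - a) * w"
  shows "argmax_unit (curved_payoff a c w) = {0}"
proof -
  define A where "A = a powr a * (1 - a) powr (1 - a)"
  define B where "B = (c * (w - 1)) powr a"
  have c0: "0 < c" using c by simp
  have slack: "a / (1 - a) \<le> w - 1" using corner a by (simp add: field_simps)
  have w: "0 < w - 1" using slack a by (smt (verit) divide_pos_pos)
  then have at_zero: "curved_payoff a c w 0 = B"
    using c0 unfolding curved_payoff_def B_def by (simp add: max_def mult_le_0_iff)
  have AB: "A < B" using amgm_constant_less_corner[OF a c corner] unfolding A_def B_def .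
  have less: "curved_payoff a c w z < B" if "0 < z" "z \<le> 1" for z
  proof (cases "z < c * (z + w - 1)")
    case True
    have "curved_payoff a c w z = c powr a * ((z + w - 1) powr a * (1 - z) powr (1 - a))"
      using curved_payoff_curve[OF c0 _ True] that by simp
    also have "\<dots> < c powr a * (w - 1) powr a"
      using curve_less_corner[OF a that corner] c0 by simp
    also have "\<dots> = B" using c0 w unfolding B_def by (simp add: powr_mult)
    finally show ?thesis .
  next
    case False
    then show ?thesis
      using weighted_amgm_scaled(1)[OF a, of z "1 - z"] AB that
      unfolding curved_payoff_flat[OF False] A_def by simp
  qed
  show ?thesis
  proof (rule argmax_unit_eqI)
    show "curved_payoff a c w z \<le> B" if "z \<in> {0..1}" for z
      using less[of z] at_zero that by (cases "z = 0") auto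
    show "z \<in> {0}" if "z \<in> {0..1}" "curved_payoff a c w z = B" for z
      using less[of z] that by fastforce
  qed (use at_zero in auto)
qed

section \<open>The function phi and its zero J\<close>

lemma phi_eq_affine:
  assumes n: "2 \<le> n" and z: "z < 1 + real n * m / (real n - 1)"
  shows "phi n m a z = ((real n - 1) / real n) powr a * (1 + real n * m / (real n - 1) - z) - 1"
proof -
  define c y where "c = (real n - 1) / real n" and "y = 1 + real n * m / (real n - 1) - z"
  have c: "0 < c" and y: "0 < y" using n z unfolding c_def y_def by auto
  have "m + c * (1 - z) = c * y" using n unfolding c_def y_def by (simp add: field_simps)
  then have "phi n m a z = (c * y) powr a * y powr (1 - a) - 1"
    unfolding phi_def c_def y_def by simp
  also have "\<dots> = c powr a * y - 1"
    using c y by (simp add: powr_mult mult.assoc flip: powr_add)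
  finally show ?thesis unfolding c_def y_def .
qed

lemma phi_eq_zero_iff:
  assumes n: "2 \<le> n" and z: "z < 1 + real n * m / (real n - 1)"
  shows "phi n m a z = 0 \<longleftrightarrow> z = 1 + real n * m / (real n - 1) - (real n / (real n - 1)) powr a"
proof -
  define C D K where "C = ((real n - 1) / real n) powr a" and "D = (real n / (real n - 1)) powr a"
    and "K = real n * m / (real n - 1)"
  have C: "0 < C" using n unfolding C_def by simp
  have D: "D = 1 / C" using n unfolding C_def D_def by (simp add: powr_divide)
  have "phi n m a z = C * (1 + K - z) - 1"
    using phi_eq_affine[OF n z] unfolding C_def K_def .
  also have "\<dots> = 0 \<longleftrightarrow> z = 1 + K - D"
    using C unfolding D by (auto simp: field_simps)
  finally show ?thesis unfolding D_def K_def .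
qed

lemma phi_root_bounds:
  assumes n: "2 \<le> n" and a: "0 < a" "a < 1"
  shows "J_lo n m a < 1 + real n * m / (real n - 1) - (real n / (real n - 1)) powr a"
    and "1 + real n * m / (real n - 1) - (real n / (real n - 1)) powr a < J_hi n m a"
proof -
  have "(real n / (real n - 1)) powr a < 1 + a / (real n - 1)"
    using weighted_amgm_strict[OF a, of "real n / (real n - 1)" 1] n by (simp add: field_simps)
  then show "J_lo n m a < 1 + real n * m / (real n - 1) - (real n / (real n - 1)) powr a"
    unfolding J_lo_def using n by (simp add: diff_divide_distrib)
  have "((real n - 1) / real n) powr a < (real n - a) / real n"
    using weighted_amgm_strict[OF a, of "(real n - 1) / real n" 1] n by (simp add: field_simps)
  then have "real n / (real n - a) < (real n / (real n - 1)) powr a"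
    using n a by (simp add: powr_divide field_simps)
  moreover have "real n / (real n - a) = 1 + a / (real n - a)"
    using n a by (simp add: field_simps)
  ultimately show "1 + real n * m / (real n - 1) - (real n / (real n - 1)) powr a < J_hi n m a"
    unfolding J_hi_def by simp
qed

lemma J_hi_le:
  assumes "2 \<le> n" "0 < a" "a < 1"
  shows "J_hi n m a \<le> real n * m / (real n - 1)"
  using assms unfolding J_hi_def by simp

lemma phi_unique_zero:
  assumes n: "2 \<le> n" and a: "0 < a" "a < 1"
  shows "\<exists>!z. z \<in> {J_lo n m a .. J_hi n m a} \<and> phi n m a z = 0"
proof -
  define r where "r = 1 + real n * m / (real n - 1) - (real n / (real n - 1)) powr a"
  have below_pole: "z < 1 + real n * m / (real n - 1)" if "z \<le> J_hi n m a" for z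
    using that J_hi_le[OF assms, of m] by simp
  show ?thesis
  proof (rule ex1I[of _ r])
    show "r \<in> {J_lo n m a .. J_hi n m a} \<and> phi n m a r = 0"
      using phi_root_bounds[OF assms, of m] phi_eq_zero_iff[OF n below_pole]
      unfolding r_def by simp
    show "z = r" if "z \<in> {J_lo n m a .. J_hi n m a} \<and> phi n m a z = 0" for z
      using that phi_eq_zero_iff[OF n below_pole] unfolding r_def by auto
  qed
qed

lemma J_eq:
  assumes n: "2 \<le> n" and a: "0 < a" "a < 1"
  shows "J n m a = 1 + real n * m / (real n - 1) - (real n / (real n - 1)) powr a"
  unfolding J_def
proof (rule the1_equality[OF phi_unique_zero[OF assms]])
  show "1 + real n * m / (real n - 1) - (real n / (real n - 1)) powr a \<in> {J_lo n m a .. J_hi n m a}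
    \<and> phi n m a (1 + real n * m / (real n - 1) - (real n / (real n - 1)) powr a) = 0"
    using phi_root_bounds[OF assms, of m] phi_eq_zero_iff[OF n] n by simp
qed

lemma phi_affine_eq_J:
  assumes n: "2 \<le> n" and a: "0 < a" "a < 1"
  shows "((real n - 1) / real n) powr a * (1 + real n * m / (real n - 1) - s) - 1
       = ((real n - 1) / real n) powr a * (J n m a - s)"
proof -
  have "((real n - 1) / real n) powr a * (real n / (real n - 1)) powr a = 1"
    using n by (simp flip: powr_mult)
  then show ?thesis unfolding J_eq[OF n a] by (simp add: algebra_simps)
qed

lemma J_interval_subset:
  assumes "2 \<le> n" "0 < a" "a < 1"
  shows "{J_lo n m a .. J_hi n m a} \<subseteq> {(real n * m - 1) / (real n - 1) .. real n * m / (real n - 1)}"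
  using J_hi_le[OF assms] assms unfolding J_lo_def by (auto simp: divide_right_mono)

section \<open>Best responses in the curved-exam game\<close>

lemma sum_update_remove:
  fixes x :: "nat \<Rightarrow> 'a::comm_monoid_add"
  assumes "i < n"
  shows "(\<Sum>j<n. (x(i := z)) j) = z + (\<Sum>j\<in>{..<n} - {i}. x j)"
proof -
  have "(\<Sum>j<n. (x(i := z)) j) = z + (\<Sum>j\<in>{..<n} - {i}. (x(i := z)) j)"
    using assms by (simp add: sum.remove)
  also have "(\<Sum>j\<in>{..<n} - {i}. (x(i := z)) j) = (\<Sum>j\<in>{..<n} - {i}. x j)"
    by (intro sum.cong) auto
  finally show ?thesis .
qed

lemma xbar_update:
  assumes n: "2 \<le> n" and i: "i < n"
  shows "xbar n (x(i := z)) = (z + (real n - 1) * xbar_minus n i x) / real n"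
  using n unfolding xbar_def xbar_minus_def sum_update_remove[OF i] by simp

lemma payoff_update:
  assumes n: "2 \<le> n" and i: "i < n"
  shows "payoff n m a i (x(i := z)) = curved_payoff a ((real n - 1) / real n)
           (1 + real n * m / (real n - 1) - xbar_minus n i x) z"
proof -
  have "z + (m - xbar n (x(i := z)))
      = (real n - 1) / real n * (z + (1 + real n * m / (real n - 1) - xbar_minus n i x) - 1)"
    unfolding xbar_update[OF n i] using n by (simp add: field_simps)
  then have "grade n m i (x(i := z))
      = max ((real n - 1) / real n * (z + (1 + real n * m / (real n - 1) - xbar_minus n i x) - 1)) z"
    unfolding grade_def by (simp add: max_def)
  then show ?thesis unfolding payoff_def curved_payoff_def by simp
qed

lemma best_response_eq_argmax:
  assumes "2 \<le> n" "i < n"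
  shows "best_response n m a i x = argmax_unit (curved_payoff a ((real n - 1) / real n)
           (1 + real n * m / (real n - 1) - xbar_minus n i x))"
  unfolding best_response_def argmax_unit_def payoff_update[OF assms] ..

lemma best_response_cases:
  fixes x :: "nat \<Rightarrow> real" and m :: real
  assumes n: "2 \<le> n" and i: "i < n" and a: "0 < a" "a < 1"
  defines "s \<equiv> xbar_minus n i x" and "t \<equiv> real n * m / (real n - 1) - a / (1 - a)"
  shows "J n m a < s \<Longrightarrow> best_response n m a i x = {a}"
    and "s = J n m a \<Longrightarrow> best_response n m a i x = {xL n m a s, a}"
    and "t \<le> s \<Longrightarrow> s < J n m a \<Longrightarrow> best_response n m a i x = {xL n m a s}"
    and "s \<le> t \<Longrightarrow> best_response n m a i x = {0}"
proof -
  define c w where "c = (real n - 1) / real n" and "w = 1 + real n * m / (real n - 1) - s"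
  have c: "1 / 2 \<le> c" "0 < c" using n unfolding c_def by (auto simp: field_simps)
  have C: "0 < c powr a" using c by simp
  have BR: "best_response n m a i x = argmax_unit (curved_payoff a c w)"
    using best_response_eq_argmax[OF n i] unfolding c_def w_def s_def .
  have gain: "c powr a * w - 1 = c powr a * (J n m a - s)"
    using phi_affine_eq_J[OF n a] unfolding c_def w_def .
  have xL: "xL n m a s = 1 - (1 - a) * w"
    unfolding xL_def w_def by (simp add: algebra_simps)
  have "s - t = (1 - (1 - a) * w) / (1 - a)"
    using a unfolding t_def w_def by (simp add: field_simps)
  then have t: "t \<le> s \<longleftrightarrow> (1 - a) * w \<le> 1" "s \<le> t \<longleftrightarrow> 1 \<le> (1 - a) * w"
    using a by (smt (verit) divide_le_0_iff zero_le_divide_iff)+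
  show "best_response n m a i x = {a}" if "J n m a < s"
  proof -
    have "c powr a * (J n m a - s) < 0" using C that by (simp add: mult_pos_neg)
    then show ?thesis unfolding BR using argmax_curved_payoff_flat[OF a c(2)] gain by simp
  qed
  show "best_response n m a i x = {xL n m a s, a}" if "s = J n m a"
  proof -
    have "c powr a * w = 1" using that gain by simp
    then show ?thesis unfolding BR xL using argmax_curved_payoff_tie[OF a c(1)] by simp
  qed
  show "best_response n m a i x = {xL n m a s}" if "t \<le> s" "s < J n m a"
  proof -
    have "0 < c powr a * (J n m a - s)" using C that(2) by simp
    then have "1 < c powr a * w" using gain by simp
    moreover have "(1 - a) * w \<le> 1" using that(1) t(1) by simp
    ultimately show ?thesis unfolding BR xL using argmax_curved_payoff_interior[OF a c(2)] by simp
  qed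
  show "best_response n m a i x = {0}" if "s \<le> t"
  proof -
    have "1 \<le> (1 - a) * w" using that t(2) by simp
    then show ?thesis unfolding BR using argmax_curved_payoff_corner[OF a c(1)] by simp
  qed
qed

lemma indifference_at_J:
  fixes x :: "nat \<Rightarrow> real"
  assumes n: "2 \<le> n" and i: "i < n" and a: "0 < a" "a < 1"
    and s: "xbar_minus n i x = J n m a"
  shows "payoff n m a i (x(i := xL n m a (J n m a))) = payoff n m a i (x(i := a))"
    and "xbar n (x(i := xL n m a (J n m a))) < m"
    and "m \<le> xbar n (x(i := a))"
proof -
  have "xL n m a (J n m a) \<in> best_response n m a i x" "a \<in> best_response n m a i x"
    using best_response_cases(2)[OF n i a, where x = x and m = m] s by simp_all
  then show "payoff n m a i (x(i := xL n m a (J n m a))) = payoff n m a i (x(i := a))"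
    unfolding best_response_def by (auto intro: antisym)
  define N where "N = real n"
  define K where "K = N * m / (N - 1)"
  have N: "2 \<le> N" and NK: "(N - 1) * K = N * m" using n unfolding N_def K_def by auto
  have xbar: "xbar n (x(i := z)) = (z + (N - 1) * J n m a) / N" for z
    using xbar_update[OF n i] s unfolding N_def by simp
  \<comment> \<open>Effort a reaches the target mean iff xbar_{-i} >= J_lo, effort x^(L) stays below it iff
    xbar_{-i} < J_hi.\<close>
  have "J_lo n m a < J n m a" "J n m a < J_hi n m a"
    using phi_root_bounds[OF n a, of m] unfolding J_eq[OF n a] by simp_all
  then have lo: "N * m - a < (N - 1) * J n m a" and hi: "(N - a) * J n m a < (N - a) * K - a"
    using N a unfolding J_lo_def J_hi_def N_def[symmetric] K_def[symmetric]
    by (simp_all add: field_simps)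
  have "xL n m a (J n m a) + (N - 1) * J n m a = a - (1 - a) * K + (N - a) * J n m a"
    unfolding xL_def N_def[symmetric] K_def[symmetric] by (simp add: algebra_simps)
  also have "\<dots> < N * m" using hi NK by (simp add: algebra_simps)
  finally show "xbar n (x(i := xL n m a (J n m a))) < m"
    unfolding xbar using N by (simp add: field_simps)
  show "m \<le> xbar n (x(i := a))"
    unfolding xbar using lo N by (simp add: field_simps)
qed

theorem mainTheorem10:
  fixes n :: nat and \<alpha> :: "nat \<Rightarrow> real" and m :: real and i :: nat
  assumes hn: "n \<ge> 2"
    and h\<alpha>: "\<forall>j<n. 0 < \<alpha> j \<and> \<alpha> j < 1"
    and hm: "0 < m" "m < 1"
    and hi: "i < n"
  shows
    "(\<exists>!z. z \<in> {J_lo n m (\<alpha> i) .. J_hi n m (\<alpha> i)} \<and> phi n m (\<alpha> i) z = 0)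
     \<and> {J_lo n m (\<alpha> i) .. J_hi n m (\<alpha> i)}
         \<subseteq> {(real n * m - 1) / (real n - 1) .. real n * m / (real n - 1)}
     \<and> (\<forall>x. (\<forall>j\<in>{..<n} - {i}. 0 \<le> x j \<and> x j \<le> 1) \<longrightarrow>
          (let s = xbar_minus n i x; Ji = J n m (\<alpha> i); a = \<alpha> i;
               t = real n * m / (real n - 1) - a / (1 - a) in
            (s = Ji \<longrightarrow>
               payoff n m a i (x(i := xL n m a s)) = payoff n m a i (x(i := a))
               \<and> xbar n (x(i := xL n m a s)) < m
               \<and> xbar n (x(i := a)) \<ge> m)
          \<and> (Ji < s \<and> s \<le> 1 \<longrightarrow> best_response n m a i x = {a})
          \<and> (s = Ji \<longrightarrow> best_response n m a i x = {xL n m a Ji, a})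
          \<and> (t \<le> s \<and> s < Ji \<longrightarrow> best_response n m a i x = {xL n m a s})
          \<and> (0 \<le> s \<and> s \<le> t \<longrightarrow> best_response n m a i x = {0})))"
proof -
  have a: "0 < \<alpha> i" "\<alpha> i < 1" using h\<alpha> hi by auto
  have "let s = xbar_minus n i x; Ji = J n m (\<alpha> i); a = \<alpha> i;
            t = real n * m / (real n - 1) - a / (1 - a) in
          (s = Ji \<longrightarrow>
             payoff n m a i (x(i := xL n m a s)) = payoff n m a i (x(i := a))
             \<and> xbar n (x(i := xL n m a s)) < m
             \<and> xbar n (x(i := a)) \<ge> m)
        \<and> (Ji < s \<and> s \<le> 1 \<longrightarrow> best_response n m a i x = {a})
        \<and> (s = Ji \<longrightarrow> best_response n m a i x = {xL n m a Ji, a})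
        \<and> (t \<le> s \<and> s < Ji \<longrightarrow> best_response n m a i x = {xL n m a s})
        \<and> (0 \<le> s \<and> s \<le> t \<longrightarrow> best_response n m a i x = {0})" for x
    using best_response_cases[OF hn hi a, where x = x and m = m]
      indifference_at_J[OF hn hi a, where x = x and m = m]
    unfolding Let_def by auto
  then show ?thesis
    using phi_unique_zero[OF hn a, of m] J_interval_subset[OF hn a, of m] by blast
qed

end
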